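(* Suppose $(f_m)$ is an orthonormal basis of $\mathcal{L}^2(I)$ and $\Lambda<1/2$. Then $(f_m*_T0)$ is a bounded Riesz basis of $\mathcal{L}^2(I)$.
   Context: Let $N\ge 2$, $I=[x_0,x_N]$, $\Delta: x_0<\dots<x_N$ a partition, $L_n(x)=a_nx+b_n$ affine with $L_n(x_0)=x_{n-1}$, $L_n(x_N)=x_n$, $I_1=[x_0,x_1]$, $I_n=(x_{n-1},x_n]$ for $n\ge2$, and $\alpha=(\alpha_1,\dots,\alpha_N)\in(\mathcal{L}^\infty(I))^N$ with $\Lambda:=\operatorname{ess\,sup}\{|\alpha_n(x)|:x\in I,n=1,\dots,N\}<1$. For $f,b\in\mathcal{L}^2(I)$, $f*_Tb$ is the unique fixed point in $\mathcal{L}^2(I)$ of the contraction $Tg(x):=f(x)+\alpha_n(L_n^{-1}(x))(g-b)(L_n^{-1}(x))$, $x\in I_n$; $0$ is the null function. A sequence $(x_m)$ is bounded if there are constants $0<k\le K$ with $k\le\|x_m\|_2\le K$ for all $m$. *)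

theory Defs
  imports "HOL-Analysis.Analysis" "HOL-Probability.Essential_Supremum"
begin

(* Real-valued L^2(I) on an interval I, functions compared almost everywhere w.r.t. Lebesgue measure on I *)

definition L2 :: "real set \<Rightarrow> (real \<Rightarrow> real) \<Rightarrow> bool" where
  "L2 I g \<longleftrightarrow> g \<in> borel_measurable (lebesgue_on I) \<and> integrable (lebesgue_on I) (\<lambda>t. (g t)^2)"

definition l2_inner :: "real set \<Rightarrow> (real \<Rightarrow> real) \<Rightarrow> (real \<Rightarrow> real) \<Rightarrow> real" where
  "l2_inner I g h = (LINT t|lebesgue_on I. g t * h t)"

definition l2_norm :: "real set \<Rightarrow> (real \<Rightarrow> real) \<Rightarrow> real" where
  "l2_norm I g = sqrt (LINT t|lebesgue_on I. (g t)^2)"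

definition orthonormal_basis :: "real set \<Rightarrow> (nat \<Rightarrow> real \<Rightarrow> real) \<Rightarrow> bool" where
  "orthonormal_basis I e \<longleftrightarrow>
     (\<forall>m. L2 I (e m)) \<and>
     (\<forall>m n. l2_inner I (e m) (e n) = (if m = n then 1 else 0)) \<and>
     (\<forall>g. L2 I g \<longrightarrow>
        (\<lambda>n. l2_norm I (\<lambda>t. g t - (\<Sum>m<n. l2_inner I g (e m) * e m t))) \<longlonglongrightarrow> 0)"

definition bounded_op :: "real set \<Rightarrow> ((real \<Rightarrow> real) \<Rightarrow> (real \<Rightarrow> real)) \<Rightarrow> bool" where
  "bounded_op I U \<longleftrightarrow>
     (\<forall>g. L2 I g \<longrightarrow> L2 I (U g)) \<and>
     (\<forall>g h a b. L2 I g \<longrightarrow> L2 I h \<longrightarrow>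
        (AE t in lebesgue_on I. U (\<lambda>s. a * g s + b * h s) t = a * U g t + b * U h t)) \<and>
     (\<exists>C. \<forall>g. L2 I g \<longrightarrow> l2_norm I (U g) \<le> C * l2_norm I g)"

definition riesz_basis :: "real set \<Rightarrow> (nat \<Rightarrow> real \<Rightarrow> real) \<Rightarrow> bool" where
  "riesz_basis I y \<longleftrightarrow>
     (\<exists>e U V. orthonormal_basis I e \<and> bounded_op I U \<and> bounded_op I V \<and>
        (\<forall>g. L2 I g \<longrightarrow> (AE t in lebesgue_on I. V (U g) t = g t)) \<and>
        (\<forall>g. L2 I g \<longrightarrow> (AE t in lebesgue_on I. U (V g) t = g t)) \<and>
        (\<forall>m. AE t in lebesgue_on I. U (e m) t = y m t))"

definition bounded_seq :: "real set \<Rightarrow> (nat \<Rightarrow> real \<Rightarrow> real) \<Rightarrow> bool" where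
  "bounded_seq I y \<longleftrightarrow> (\<exists>k K. 0 < k \<and> k \<le> K \<and> (\<forall>m. k \<le> l2_norm I (y m) \<and> l2_norm I (y m) \<le> K))"

(* partition data: x 0 < ... < x N, I = [x 0, x N] *)
definition Iseg :: "(nat \<Rightarrow> real) \<Rightarrow> nat \<Rightarrow> real set" where
  "Iseg x n = (if n = 1 then {x 0 .. x 1} else {x (n - 1) <.. x n})"

(* L_n(t) = a_n t + b_n with L_n(x_0) = x_{n-1}, L_n(x_N) = x_n, and its inverse *)
definition Lmap :: "(nat \<Rightarrow> real) \<Rightarrow> nat \<Rightarrow> nat \<Rightarrow> real \<Rightarrow> real" where
  "Lmap x N n t = x (n - 1) + (x n - x (n - 1)) / (x N - x 0) * (t - x 0)"

definition Linv :: "(nat \<Rightarrow> real) \<Rightarrow> nat \<Rightarrow> nat \<Rightarrow> real \<Rightarrow> real" where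
  "Linv x N n s = x 0 + (x N - x 0) / (x n - x (n - 1)) * (s - x (n - 1))"

definition fractal_T ::
  "(nat \<Rightarrow> real) \<Rightarrow> nat \<Rightarrow> (nat \<Rightarrow> real \<Rightarrow> real) \<Rightarrow> (real \<Rightarrow> real) \<Rightarrow> (real \<Rightarrow> real)
     \<Rightarrow> (real \<Rightarrow> real) \<Rightarrow> real \<Rightarrow> real" where
  "fractal_T x N \<alpha> f b g t = f t +
     (\<Sum>n\<in>{1..N}. if t \<in> Iseg x n
        then \<alpha> n (Linv x N n t) * (g (Linv x N n t) - b (Linv x N n t)) else 0)"

(* h is (a representative of) f *_T b: a fixed point of T in L^2(I) *)
definition is_fractal ::
  "(nat \<Rightarrow> real) \<Rightarrow> nat \<Rightarrow> (nat \<Rightarrow> real \<Rightarrow> real) \<Rightarrow> (real \<Rightarrow> real) \<Rightarrow> (real \<Rightarrow> real)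
     \<Rightarrow> (real \<Rightarrow> real) \<Rightarrow> bool" where
  "is_fractal x N \<alpha> f b h \<longleftrightarrow> L2 {x 0 .. x N} h \<and>
     (AE t in lebesgue_on {x 0 .. x N}. h t = fractal_T x N \<alpha> f b h t)"

end

theory Submission
  imports Defs
begin

text \<open>
  With \<open>b = 0\<close> the operator is \<open>T g = f + A g\<close> with \<open>A\<close> linear, so \<open>f *\<^sub>T 0 = (I - A)\<^sup>-\<^sup>1 f\<close>.
  Substituting \<open>s = L\<^sub>n\<^sup>-\<^sup>1 t\<close> on each piece \<open>I\<^sub>n\<close> and using that the relative lengths of
  the pieces sum to 1 gives \<open>\<parallel>A g\<parallel> \<le> \<Lambda> \<parallel>g\<parallel>\<close>, hence \<open>I - A\<close> is invertible with inverse the Neumann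
  series \<open>U = \<Sum>\<^sub>k A\<^sup>k\<close>, and \<open>\<parallel>U\<parallel> \<le> 1/(1 - \<Lambda>)\<close>, \<open>\<parallel>I - A\<parallel> \<le> 2\<close>. Thus \<open>(f\<^sub>m *\<^sub>T 0) = (U f\<^sub>m)\<close> is the
  image of an orthonormal basis under a bounded invertible operator, with norms in \<open>[1/2, 2]\<close>.
  As functions are handled through representatives, \<open>U g\<close> is summed pointwise: the series
  converges almost everywhere because \<open>\<Sum>\<^sub>k \<Lambda>\<^sup>-\<^sup>k \<bar>A\<^sup>k g\<bar>\<^sup>2\<close> is integrable, and a weighted
  Cauchy--Schwarz inequality bounds \<open>\<bar>U g\<bar>\<^sup>2\<close> by \<open>1/(1 - \<Lambda>)\<close> times that sum.
\<close>

lemma summable_and_square_suminf_le: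
  fixes c :: "nat \<Rightarrow> real" and r :: real
  assumes r: "0 < r" "r < 1" and s: "summable (\<lambda>k. (c k)\<^sup>2 / r ^ k)"
  shows "summable c" and "(suminf c)\<^sup>2 \<le> (\<Sum>k. (c k)\<^sup>2 / r ^ k) / (1 - r)"
proof -
  have geom: "summable (\<lambda>k. r ^ k)" using r by (simp add: summable_geometric)
  have amgm: "norm (c k) \<le> (r ^ k + (c k)\<^sup>2 / r ^ k) / 2" for k
  proof -
    have rk: "r ^ k > 0" using r by simp
    have "0 \<le> (r ^ k - \<bar>c k\<bar>)\<^sup>2" by simp
    then have "2 * \<bar>c k\<bar> * r ^ k \<le> (r ^ k)\<^sup>2 + (c k)\<^sup>2"
      by (simp add: power2_diff mult_ac)
    then have "2 * \<bar>c k\<bar> \<le> ((r ^ k)\<^sup>2 + (c k)\<^sup>2) / r ^ k"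
      using rk by (simp add: pos_le_divide_eq)
    also have "\<dots> = r ^ k + (c k)\<^sup>2 / r ^ k"
      using rk by (simp add: power2_eq_square add_divide_distrib)
    finally show ?thesis by simp
  qed
  show sc: "summable c"
    by (rule summable_comparison_test[OF _ summable_divide[OF summable_add[OF geom s], of 2]])
      (use amgm in auto)
  have partial: "(\<Sum>k<n. c k)\<^sup>2 \<le> (\<Sum>k. (c k)\<^sup>2 / r ^ k) / (1 - r)" for n
  proof -
    have split: "c k = sqrt (r ^ k) * (c k / sqrt (r ^ k))" for k
      using r by simp
    have "(\<Sum>k<n. c k)\<^sup>2 = (\<Sum>k<n. sqrt (r ^ k) * (c k / sqrt (r ^ k)))\<^sup>2"
      by (subst split) simp
    also have "\<dots> \<le> (\<Sum>k<n. (sqrt (r ^ k))\<^sup>2) * (\<Sum>k<n. (c k / sqrt (r ^ k))\<^sup>2)"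
      by (rule Cauchy_Schwarz_ineq_sum)
    also have "\<dots> = (\<Sum>k<n. r ^ k) * (\<Sum>k<n. (c k)\<^sup>2 / r ^ k)"
      using r by (simp add: power_divide)
    also have "\<dots> \<le> (\<Sum>k. r ^ k) * (\<Sum>k. (c k)\<^sup>2 / r ^ k)"
      using r by (intro mult_mono sum_le_suminf geom s sum_nonneg suminf_nonneg) auto
    also have "\<dots> = (\<Sum>k. (c k)\<^sup>2 / r ^ k) / (1 - r)"
      using r by (simp add: suminf_geometric)
    finally show ?thesis .
  qed
  have "(\<lambda>n. (\<Sum>k<n. c k)\<^sup>2) \<longlonglongrightarrow> (suminf c)\<^sup>2"
    by (intro tendsto_power summable_LIMSEQ sc)
  then show "(suminf c)\<^sup>2 \<le> (\<Sum>k. (c k)\<^sup>2 / r ^ k) / (1 - r)"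
    by (rule LIMSEQ_le_const2) (use partial in auto)
qed

definition nn_sq_integral :: "'a measure \<Rightarrow> ('a \<Rightarrow> real) \<Rightarrow> ennreal" where
  "nn_sq_integral M g = (\<integral>\<^sup>+t. ennreal ((g t)\<^sup>2) \<partial>M)"

lemma L2_iff_nn_sq_integral:
  "L2 I g \<longleftrightarrow> g \<in> borel_measurable (lebesgue_on I) \<and> nn_sq_integral (lebesgue_on I) g < \<infinity>"
  unfolding L2_def nn_sq_integral_def integrable_iff_bounded by auto

lemma l2_norm_eq_sqrt_nn_sq_integral:
  "g \<in> borel_measurable (lebesgue_on I) \<Longrightarrow>
    l2_norm I g = sqrt (enn2real (nn_sq_integral (lebesgue_on I) g))"
  unfolding l2_norm_def nn_sq_integral_def by (subst integral_eq_nn_integral) auto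

lemma l2_norm_le_if_nn_sq_integral_le:
  assumes u: "u \<in> borel_measurable (lebesgue_on I)" and v: "v \<in> borel_measurable (lebesgue_on I)"
    and C: "0 \<le> C"
    and le: "nn_sq_integral (lebesgue_on I) u \<le> ennreal C * nn_sq_integral (lebesgue_on I) v"
    and fin: "nn_sq_integral (lebesgue_on I) v < \<infinity>"
  shows "l2_norm I u \<le> sqrt C * l2_norm I v"
proof -
  have "enn2real (nn_sq_integral (lebesgue_on I) u)
      \<le> enn2real (ennreal C * nn_sq_integral (lebesgue_on I) v)"
    using le fin by (intro enn2real_mono) (auto simp: ennreal_mult_less_top)
  also have "\<dots> = C * enn2real (nn_sq_integral (lebesgue_on I) v)"
    using C by (simp add: enn2real_mult)
  finally show ?thesis
    unfolding l2_norm_eq_sqrt_nn_sq_integral[OF u] l2_norm_eq_sqrt_nn_sq_integral[OF v]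
    by (simp add: real_sqrt_mult[symmetric])
qed

lemma l2_norm_cong_AE:
  assumes "u \<in> borel_measurable (lebesgue_on I)" "v \<in> borel_measurable (lebesgue_on I)"
    and "AE t in lebesgue_on I. u t = v t"
  shows "l2_norm I u = l2_norm I v"
  unfolding l2_norm_def using assms by (auto intro!: integral_cong_AE elim: eventually_mono)

lemma nn_sq_integral_diff_le:
  assumes [measurable]: "u \<in> borel_measurable M" "v \<in> borel_measurable M"
  shows "nn_sq_integral M (\<lambda>t. u t - v t) \<le> 2 * nn_sq_integral M u + 2 * nn_sq_integral M v"
proof -
  have "nn_sq_integral M (\<lambda>t. u t - v t) \<le> (\<integral>\<^sup>+t. 2 * ennreal ((u t)\<^sup>2) + 2 * ennreal ((v t)\<^sup>2) \<partial>M)"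
    unfolding nn_sq_integral_def
  proof (rule nn_integral_mono)
    fix t
    have "(u t - v t)\<^sup>2 \<le> 2 * (u t)\<^sup>2 + 2 * (v t)\<^sup>2"
      using zero_le_power2[of "u t + v t"] by (simp add: power2_diff power2_sum)
    then have "ennreal ((u t - v t)\<^sup>2) \<le> ennreal (2 * (u t)\<^sup>2 + 2 * (v t)\<^sup>2)"
      by (rule ennreal_leI)
    also have "\<dots> = ennreal (2 * (u t)\<^sup>2) + ennreal (2 * (v t)\<^sup>2)"
      by (rule ennreal_plus) auto
    finally show "ennreal ((u t - v t)\<^sup>2) \<le> 2 * ennreal ((u t)\<^sup>2) + 2 * ennreal ((v t)\<^sup>2)"
      by (simp add: ennreal_mult)
  qed
  also have "\<dots> = 2 * nn_sq_integral M u + 2 * nn_sq_integral M v"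
    unfolding nn_sq_integral_def by (subst nn_integral_add) (auto simp: nn_integral_cmult)
  finally show ?thesis .
qed

lemma L2_diff:
  assumes "L2 I u" "L2 I v"
  shows "L2 I (\<lambda>t. u t - v t)"
proof -
  have [measurable]: "u \<in> borel_measurable (lebesgue_on I)" "v \<in> borel_measurable (lebesgue_on I)"
    and fin: "nn_sq_integral (lebesgue_on I) u < \<infinity>" "nn_sq_integral (lebesgue_on I) v < \<infinity>"
    using assms by (auto simp: L2_iff_nn_sq_integral)
  have "nn_sq_integral (lebesgue_on I) (\<lambda>t. u t - v t)
      \<le> 2 * nn_sq_integral (lebesgue_on I) u + 2 * nn_sq_integral (lebesgue_on I) v"
    by (rule nn_sq_integral_diff_le) measurable
  also have "\<dots> < \<infinity>"
    using fin by (simp add: ennreal_mult_less_top)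
  finally show ?thesis by (simp add: L2_iff_nn_sq_integral)
qed

lemma ennreal_eq_0_if_le_contraction:
  fixes q :: ennreal
  assumes "q \<le> ennreal a * q" "q < \<infinity>" "a < 1"
  shows "q = 0"
proof -
  have "enn2real q \<le> enn2real (ennreal a * q)"
    using assms by (intro enn2real_mono) (auto simp: ennreal_mult_less_top)
  also have "\<dots> = max 0 a * enn2real q"
    by (cases "0 \<le> a") (auto simp: enn2real_mult ennreal_neg)
  finally have "enn2real q \<le> max 0 a * enn2real q" .
  then have "enn2real q = 0"
    using assms(3) by (smt (verit) enn2real_nonneg mult_le_cancel_right1)
  with assms(2) show ?thesis by (auto simp: enn2real_eq_0_iff)
qed

lemma bounded_opI:
  assumes meas: "\<And>g. L2 I g \<Longrightarrow> U g \<in> borel_measurable (lebesgue_on I)"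
    and le: "\<And>g. L2 I g \<Longrightarrow>
      nn_sq_integral (lebesgue_on I) (U g) \<le> ennreal C * nn_sq_integral (lebesgue_on I) g"
    and lin: "\<And>g h a b. L2 I g \<Longrightarrow> L2 I h \<Longrightarrow>
      AE t in lebesgue_on I. U (\<lambda>s. a * g s + b * h s) t = a * U g t + b * U h t"
    and C: "0 \<le> C"
  shows "bounded_op I U"
  unfolding bounded_op_def
proof (intro conjI allI impI exI)
  fix g assume g: "L2 I g"
  then have gm: "g \<in> borel_measurable (lebesgue_on I)"
    and fin: "nn_sq_integral (lebesgue_on I) g < \<infinity>"
    by (auto simp: L2_iff_nn_sq_integral)
  have "ennreal C * nn_sq_integral (lebesgue_on I) g < \<infinity>"
    using fin by (simp add: ennreal_mult_less_top)
  with le[OF g] meas[OF g] show "L2 I (U g)"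
    by (auto simp: L2_iff_nn_sq_integral)
  show "l2_norm I (U g) \<le> sqrt C * l2_norm I g"
    by (rule l2_norm_le_if_nn_sq_integral_le[OF meas[OF g] gm C le[OF g] fin])
qed (use lin in auto)

locale interval_partition =
  fixes N :: nat and x :: "nat \<Rightarrow> real"
  assumes N_pos: "0 < N" and x_step: "\<And>i. i < N \<Longrightarrow> x i < x (Suc i)"
begin

abbreviation "I \<equiv> {x 0 .. x N}"
abbreviation "M \<equiv> lebesgue_on I"
abbreviation "L \<equiv> Linv x N"

lemma x_less: "i < j \<Longrightarrow> j \<le> N \<Longrightarrow> x i < x j"
proof (induction j)
  case (Suc j)
  then show ?case using x_step[of j] by (cases "i = j") auto
qed simp

lemma x_le: "i \<le> j \<Longrightarrow> j \<le> N \<Longrightarrow> x i \<le> x j"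
  using x_less[of i j] by (cases "i = j") auto

lemma x_pred_less: "n \<in> {1..N} \<Longrightarrow> x (n - 1) < x n"
  using x_less[of "n - 1" n] by auto

lemma x_0_less_x_N: "x 0 < x N"
  using x_less[of 0 N] N_pos by auto

lemma Iseg_subset: "n \<in> {1..N} \<Longrightarrow> Iseg x n \<subseteq> {x (n - 1) .. x n}"
  by (auto simp: Iseg_def)

lemma greaterThanAtMost_subset_Iseg: "n \<in> {1..N} \<Longrightarrow> {x (n - 1) <.. x n} \<subseteq> Iseg x n"
  by (auto simp: Iseg_def)

lemma Iseg_subset_I: "n \<in> {1..N} \<Longrightarrow> Iseg x n \<subseteq> I"
  using Iseg_subset[of n] x_le[of 0 "n - 1"] x_le[of n N] by fastforce

lemma sets_Iseg [measurable]: "Iseg x n \<in> sets lebesgue"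
  by (auto simp: Iseg_def)

lemma Iseg_disjoint:
  assumes "n \<in> {1..N}" "m \<in> {1..N}" "t \<in> Iseg x n" "t \<in> Iseg x m"
  shows "n = m"
proof -
  have False if "p \<in> {1..N}" "q \<in> {1..N}" "t \<in> Iseg x p" "t \<in> Iseg x q" "p < q" for p q
  proof -
    have "t \<le> x p" using Iseg_subset[of p] that by auto
    also have "x p \<le> x (q - 1)" using that by (intro x_le) auto
    finally show False using that by (auto simp: Iseg_def)
  qed
  then show ?thesis using assms by (metis linorder_neq_iff)
qed

definition slope :: "nat \<Rightarrow> real" where
  "slope n = (x N - x 0) / (x n - x (n - 1))"

lemma slope_pos: "n \<in> {1..N} \<Longrightarrow> 0 < slope n"
  using x_pred_less x_0_less_x_N by (auto simp: slope_def)

lemma sum_inverse_slope: "(\<Sum>n\<in>{1..N}. 1 / slope n) = 1"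
proof -
  have telescope: "(\<Sum>n\<in>{1..m}. x n - x (n - 1)) = x m - x 0" for m
    by (induction m) (auto simp: sum.cl_ivl_Suc)
  have "(\<Sum>n\<in>{1..N}. 1 / slope n) = (\<Sum>n\<in>{1..N}. x n - x (n - 1)) / (x N - x 0)"
    by (simp add: slope_def sum_divide_distrib)
  also have "\<dots> = 1"
    using x_0_less_x_N by (simp only: telescope) simp
  finally show ?thesis .
qed

lemma Linv_eq: "L n t = (x 0 - slope n * x (n - 1)) + slope n * t"
  unfolding Linv_def slope_def[symmetric] by (simp add: algebra_simps)

lemma Linv_in_I_iff:
  assumes n: "n \<in> {1..N}"
  shows "L n t \<in> I \<longleftrightarrow> t \<in> {x (n - 1) .. x n}"
proof -
  have k: "0 < slope n" using slope_pos[OF n] .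
  have e: "slope n * (x n - x (n - 1)) = x N - x 0"
    using x_pred_less[OF n] by (simp add: slope_def)
  have "L n t \<in> I \<longleftrightarrow> 0 \<le> slope n * (t - x (n - 1)) \<and> slope n * (t - x (n - 1)) \<le> x N - x 0"
    unfolding Linv_def slope_def[symmetric] by auto
  also have "\<dots> \<longleftrightarrow> 0 \<le> t - x (n - 1) \<and> t - x (n - 1) \<le> x n - x (n - 1)"
    using k by (simp only: zero_le_mult_iff mult_le_cancel_left_pos flip: e) auto
  finally show ?thesis by auto
qed

lemma Linv_in_I: "n \<in> {1..N} \<Longrightarrow> t \<in> Iseg x n \<Longrightarrow> L n t \<in> I"
  using Linv_in_I_iff Iseg_subset by blast

lemma measurable_Linv_comp:
  fixes F :: "real \<Rightarrow> real"
  assumes n: "n \<in> {1..N}" and F: "F \<in> borel_measurable M"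
  shows "(\<lambda>t. if t \<in> Iseg x n then F (L n t) else 0) \<in> borel_measurable M"
proof -
  define G where "G s = (if s \<in> I then F s else 0)" for s
  have G: "G \<in> borel_measurable lebesgue"
    unfolding G_def by (rule borel_measurable_if_I[OF F]) auto
  have "(\<lambda>t. L n t) \<in> lebesgue \<rightarrow>\<^sub>M lebesgue"
    unfolding Linv_eq
    using lebesgue_affine_measurable[where c = "\<lambda>_::real. slope n" and t = "x 0 - slope n * x (n - 1)"]
      slope_pos[OF n] by simp
  then have "(\<lambda>t. if t \<in> Iseg x n then G (L n t) else 0) \<in> borel_measurable lebesgue"
    using G by measurable
  moreover have "(\<lambda>t. if t \<in> Iseg x n then G (L n t) else 0) = (\<lambda>t. if t \<in> Iseg x n then F (L n t) else 0)"
    using Linv_in_I[OF n] by (auto simp: G_def)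
  ultimately show ?thesis using measurable_restrict_space1 by metis
qed

lemma nn_integral_Linv_comp:
  fixes \<phi> :: "real \<Rightarrow> ennreal"
  assumes n: "n \<in> {1..N}" and \<phi>: "\<phi> \<in> borel_measurable M"
  shows "(\<integral>\<^sup>+t. (if t \<in> Iseg x n then \<phi> (L n t) else 0) \<partial>M) = ennreal (1 / slope n) * (\<integral>\<^sup>+s. \<phi> s \<partial>M)"
proof -
  define \<Phi> where "\<Phi> s = \<phi> s * indicator I s" for s
  have \<Phi>[measurable]: "\<Phi> \<in> borel_measurable lebesgue"
    unfolding \<Phi>_def using \<phi> borel_measurable_restrict_space_iff_ennreal[of I lebesgue \<phi>] by auto
  have k: "0 < slope n" using slope_pos[OF n] .
  have "(\<integral>\<^sup>+t. (if t \<in> Iseg x n then \<phi> (L n t) else 0) \<partial>M)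
      = (\<integral>\<^sup>+t. (if t \<in> Iseg x n then \<phi> (L n t) else 0) * indicator I t \<partial>lebesgue)"
    by (subst nn_integral_restrict_space) auto
  also have "\<dots> = (\<integral>\<^sup>+t. \<Phi> (L n t) \<partial>lebesgue)"
  proof (rule nn_integral_cong_AE)
    \<comment> \<open>\<open>Iseg x n\<close> and \<open>L n -` I\<close> differ at most in the left end point\<close>
    have "AE t in lebesgue. t \<noteq> x (n - 1)"
      by (rule AE_completion[OF AE_lborel_singleton])
    then show "AE t in lebesgue. (if t \<in> Iseg x n then \<phi> (L n t) else 0) * indicator I t = \<Phi> (L n t)"
      by (rule eventually_mono)
        (use Iseg_subset_I[OF n] Linv_in_I[OF n] Linv_in_I_iff[OF n] greaterThanAtMost_subset_Iseg[OF n]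
          in \<open>auto simp: \<Phi>_def indicator_def subset_iff\<close>)
  qed
  also have "\<dots> = ennreal (1 / slope n) * (ennreal (slope n) * (\<integral>\<^sup>+t. \<Phi> (L n t) \<partial>lebesgue))"
    using k by (simp add: ennreal_mult''[symmetric] mult.assoc[symmetric] del: ennreal_mult'')
  also have "ennreal (slope n) * (\<integral>\<^sup>+t. \<Phi> (L n t) \<partial>lebesgue) = (\<integral>\<^sup>+s. \<Phi> s \<partial>lebesgue)"
    unfolding Linv_eq using nn_integral_real_affine_lebesgue[OF \<Phi>, of "slope n"] k by simp
  also have "(\<integral>\<^sup>+s. \<Phi> s \<partial>lebesgue) = (\<integral>\<^sup>+s. \<phi> s \<partial>M)"
    unfolding \<Phi>_def by (subst nn_integral_restrict_space) auto
  finally show ?thesis .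
qed

lemma AE_Linv:
  assumes "AE s in M. P s"
  shows "AE t in M. \<forall>n\<in>{1..N}. t \<in> Iseg x n \<longrightarrow> P (L n t)"
proof -
  obtain Z where Z: "{s \<in> space M. \<not> P s} \<subseteq> Z" "emeasure M Z = 0" and [measurable]: "Z \<in> sets M"
    using assms by (rule AE_E)
  show ?thesis
  proof (rule AE_finite_allI)
    fix n assume n: "n \<in> {1..N}"
    have "(\<integral>\<^sup>+t. ennreal (if t \<in> Iseg x n then indicator Z (L n t) else 0) \<partial>M)
        = ennreal (1 / slope n) * (\<integral>\<^sup>+s. indicator Z s \<partial>M)"
      by (simp only: if_distrib[of ennreal] ennreal_0 ennreal_indicator nn_integral_Linv_comp[OF n]
          borel_measurable_indicator \<open>Z \<in> sets M\<close>)
    also have "\<dots> = 0"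
      using Z by (simp add: nn_integral_indicator)
    finally have "AE t in M. ennreal (if t \<in> Iseg x n then indicator Z (L n t) else 0) = 0"
      using measurable_Linv_comp[OF n borel_measurable_indicator[of Z]]
      by (subst (asm) nn_integral_0_iff_AE) auto
    then show "AE t in M. t \<in> Iseg x n \<longrightarrow> P (L n t)"
      by (rule eventually_mono)
        (use Linv_in_I[OF n] Z(1) in \<open>auto simp: indicator_def split: if_splits\<close>)
  qed simp
qed

end


locale fractal_setting = interval_partition +
  fixes \<alpha> :: "nat \<Rightarrow> real \<Rightarrow> real" and c :: real
  assumes \<alpha>_measurable: "\<And>n. n \<in> {1..N} \<Longrightarrow> \<alpha> n \<in> borel_measurable M"
    and c_pos: "0 < c" and c_less_1: "c < 1"
    and \<alpha>_bound: "\<And>n. n \<in> {1..N} \<Longrightarrow> AE t in M. \<bar>\<alpha> n t\<bar> \<le> c"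
begin

definition A :: "(real \<Rightarrow> real) \<Rightarrow> real \<Rightarrow> real" where
  "A g t = (\<Sum>n\<in>{1..N}. if t \<in> Iseg x n then \<alpha> n (L n t) * g (L n t) else 0)"

lemma fractal_T_zero_eq: "fractal_T x N \<alpha> f (\<lambda>_. 0) g t = f t + A g t"
  unfolding fractal_T_def A_def by (intro arg_cong2[where f = "(+)"] refl sum.cong) auto

lemma measurable_A [measurable]:
  assumes g: "g \<in> borel_measurable M"
  shows "A g \<in> borel_measurable M"
  unfolding A_def
proof (rule borel_measurable_sum)
  fix n assume n: "n \<in> {1..N}"
  have "(\<lambda>s. \<alpha> n s * g s) \<in> borel_measurable M" using \<alpha>_measurable[OF n] g by measurable
  from measurable_Linv_comp[OF n this]
  show "(\<lambda>t. if t \<in> Iseg x n then \<alpha> n (L n t) * g (L n t) else 0) \<in> borel_measurable M" .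
qed

lemma measurable_funpow_A [measurable]: "g \<in> borel_measurable M \<Longrightarrow> (A ^^ k) g \<in> borel_measurable M"
  by (induction k) auto

lemma A_linear: "A (\<lambda>s. a * g s + b * h s) t = a * A g t + b * A h t"
  unfolding A_def sum_distrib_left sum.distrib[symmetric] by (rule sum.cong) (auto simp: algebra_simps)

lemma funpow_A_linear: "(A ^^ k) (\<lambda>s. a * g s + b * h s) t = a * (A ^^ k) g t + b * (A ^^ k) h t"
proof (induction k arbitrary: t)
  case (Suc k)
  then have "(A ^^ k) (\<lambda>s. a * g s + b * h s) = (\<lambda>s. a * (A ^^ k) g s + b * (A ^^ k) h s)"
    by auto
  then show ?case by (simp add: A_linear)
qed simp

lemma funpow_A_diff: "(A ^^ k) (\<lambda>s. g s - h s) t = (A ^^ k) g t - (A ^^ k) h t"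
  using funpow_A_linear[of k 1 g "-1" h] by simp

lemma nn_sq_integral_A_le:
  assumes g [measurable]: "g \<in> borel_measurable M"
  shows "nn_sq_integral M (A g) \<le> ennreal (c\<^sup>2) * nn_sq_integral M g"
proof -
  define G where "G n s = (\<alpha> n s * g s)\<^sup>2" for n s
  have G [measurable]: "G n \<in> borel_measurable M" if "n \<in> {1..N}" for n
    unfolding G_def using \<alpha>_measurable[OF that] by measurable
  have square: "(A g t)\<^sup>2 = (\<Sum>n\<in>{1..N}. if t \<in> Iseg x n then G n (L n t) else 0)" for t
  proof (cases "\<exists>n\<in>{1..N}. t \<in> Iseg x n")
    case True
    then obtain n where n: "n \<in> {1..N}" "t \<in> Iseg x n" by blast
    then have "\<And>m. m \<in> {1..N} \<Longrightarrow> t \<in> Iseg x m \<longleftrightarrow> m = n"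
      using Iseg_disjoint by blast
    with n show ?thesis by (simp add: A_def G_def if_distrib[of "\<lambda>b. b \<and> _"] sum.delta' cong: if_cong)
  qed (auto simp: A_def)
  have "nn_sq_integral M (A g) = (\<Sum>n\<in>{1..N}. \<integral>\<^sup>+t. ennreal (if t \<in> Iseg x n then G n (L n t) else 0) \<partial>M)"
    unfolding nn_sq_integral_def square
    by (subst sum_ennreal[symmetric], simp add: G_def)
      (rule nn_integral_sum, use measurable_Linv_comp G in measurable)
  also have "\<dots> = (\<Sum>n\<in>{1..N}. ennreal (1 / slope n) * (\<integral>\<^sup>+s. ennreal (G n s) \<partial>M))"
  proof (rule sum.cong[OF refl])
    fix n assume n: "n \<in> {1..N}"
    have "(\<lambda>s. ennreal (G n s)) \<in> borel_measurable M" using G[OF n] by measurable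
    from nn_integral_Linv_comp[OF n this]
    show "(\<integral>\<^sup>+t. ennreal (if t \<in> Iseg x n then G n (L n t) else 0) \<partial>M)
        = ennreal (1 / slope n) * (\<integral>\<^sup>+s. ennreal (G n s) \<partial>M)"
      by (simp only: if_distrib[of ennreal] ennreal_0)
  qed
  also have "\<dots> \<le> (\<Sum>n\<in>{1..N}. ennreal (1 / slope n) * (ennreal (c\<^sup>2) * nn_sq_integral M g))"
  proof (intro sum_mono mult_left_mono order_refl)
    fix n assume n: "n \<in> {1..N}"
    have "(\<integral>\<^sup>+s. ennreal (G n s) \<partial>M) \<le> (\<integral>\<^sup>+s. ennreal (c\<^sup>2) * ennreal ((g s)\<^sup>2) \<partial>M)"
      using \<alpha>_bound[OF n]
    proof (rule nn_integral_mono_AE[OF eventually_mono])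
      fix s assume "\<bar>\<alpha> n s\<bar> \<le> c"
      then have "(\<alpha> n s)\<^sup>2 \<le> c\<^sup>2" by (metis abs_ge_zero power2_abs power_mono)
      then have "G n s \<le> c\<^sup>2 * (g s)\<^sup>2"
        unfolding G_def power_mult_distrib by (rule mult_right_mono) simp
      then show "ennreal (G n s) \<le> ennreal (c\<^sup>2) * ennreal ((g s)\<^sup>2)"
        by (simp add: ennreal_mult[symmetric] ennreal_leI)
    qed
    also have "\<dots> = ennreal (c\<^sup>2) * nn_sq_integral M g"
      unfolding nn_sq_integral_def by (rule nn_integral_cmult) measurable
    finally show "(\<integral>\<^sup>+s. ennreal (G n s) \<partial>M) \<le> ennreal (c\<^sup>2) * nn_sq_integral M g" .
  qed simp
  also have "\<dots> = ennreal (\<Sum>n\<in>{1..N}. 1 / slope n) * (ennreal (c\<^sup>2) * nn_sq_integral M g)"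
    by (subst sum_ennreal[symmetric]) (auto simp: sum_distrib_right slope_pos less_imp_le)
  finally show ?thesis by (simp only: sum_inverse_slope) simp
qed


lemma nn_sq_integral_funpow_A_le:
  assumes g [measurable]: "g \<in> borel_measurable M"
  shows "nn_sq_integral M ((A ^^ k) g) \<le> ennreal ((c\<^sup>2) ^ k) * nn_sq_integral M g"
proof (induction k)
  case (Suc k)
  have "nn_sq_integral M ((A ^^ Suc k) g) \<le> ennreal (c\<^sup>2) * nn_sq_integral M ((A ^^ k) g)"
    by (simp add: nn_sq_integral_A_le)
  also have "\<dots> \<le> ennreal (c\<^sup>2) * (ennreal ((c\<^sup>2) ^ k) * nn_sq_integral M g)"
    by (rule mult_left_mono[OF Suc]) simp
  finally show ?case by (simp add: ennreal_mult mult.assoc)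
qed simp

lemma nn_integral_weighted_funpow_A_le:
  assumes g [measurable]: "g \<in> borel_measurable M"
  shows "(\<integral>\<^sup>+t. (\<Sum>k. ennreal (((A ^^ k) g t)\<^sup>2 / c ^ k)) \<partial>M) \<le> ennreal (1 / (1 - c)) * nn_sq_integral M g"
proof -
  have split: "ennreal (a\<^sup>2 / c ^ k) = ennreal (1 / c ^ k) * ennreal (a\<^sup>2)" for a k
    using c_pos by (simp add: ennreal_mult[symmetric])
  have "(\<integral>\<^sup>+t. (\<Sum>k. ennreal (((A ^^ k) g t)\<^sup>2 / c ^ k)) \<partial>M)
      = (\<Sum>k. ennreal (1 / c ^ k) * nn_sq_integral M ((A ^^ k) g))"
    unfolding nn_sq_integral_def split
    by (subst nn_integral_suminf) (auto simp: nn_integral_cmult)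
  also have "\<dots> \<le> (\<Sum>k. ennreal (c ^ k) * nn_sq_integral M g)"
  proof (intro suminf_le allI)
    fix k
    have "ennreal (1 / c ^ k) * nn_sq_integral M ((A ^^ k) g)
        \<le> ennreal (1 / c ^ k) * (ennreal ((c\<^sup>2) ^ k) * nn_sq_integral M g)"
      by (intro mult_left_mono nn_sq_integral_funpow_A_le g) simp
    also have "\<dots> = ennreal (c ^ k) * nn_sq_integral M g"
    proof -
      have "(c\<^sup>2) ^ k / c ^ k = c ^ k"
        using c_pos by (simp add: power2_eq_square power_mult_distrib)
      then show ?thesis
        using c_pos by (simp add: ennreal_mult[symmetric] mult.assoc[symmetric])
    qed
    finally show "ennreal (1 / c ^ k) * nn_sq_integral M ((A ^^ k) g) \<le> ennreal (c ^ k) * nn_sq_integral M g" .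
  qed auto
  also have "\<dots> = ennreal (\<Sum>k. c ^ k) * nn_sq_integral M g"
    using c_pos c_less_1
    by (subst ennreal_suminf_multc, subst suminf_ennreal2) (auto simp: summable_geometric)
  finally show ?thesis
    using c_pos c_less_1 by (simp add: suminf_geometric)
qed


lemma AE_summable_funpow_A:
  assumes "L2 I g"
  shows "AE t in M. summable (\<lambda>k. (A ^^ k) g t) \<and>
    ennreal ((\<Sum>k. (A ^^ k) g t)\<^sup>2) \<le> ennreal (1 / (1 - c)) * (\<Sum>k. ennreal (((A ^^ k) g t)\<^sup>2 / c ^ k))"
proof -
  have g [measurable]: "g \<in> borel_measurable M" and fin: "nn_sq_integral M g < \<infinity>"
    using assms by (auto simp: L2_iff_nn_sq_integral)
  have "ennreal (1 / (1 - c)) * nn_sq_integral M g < \<infinity>"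
    using fin by (simp add: ennreal_mult_less_top)
  then have "(\<integral>\<^sup>+t. (\<Sum>k. ennreal (((A ^^ k) g t)\<^sup>2 / c ^ k)) \<partial>M) \<noteq> \<infinity>"
    by (intro less_imp_neq le_less_trans[OF nn_integral_weighted_funpow_A_le[OF g]])
  then have "AE t in M. (\<Sum>k. ennreal (((A ^^ k) g t)\<^sup>2 / c ^ k)) \<noteq> \<infinity>"
    by (intro nn_integral_PInf_AE) measurable
  then show ?thesis
  proof eventually_elim
    case (elim t)
    have s: "summable (\<lambda>k. ((A ^^ k) g t)\<^sup>2 / c ^ k)"
      using elim c_pos by (intro summable_suminf_not_top) auto
    note weighted = summable_and_square_suminf_le[OF c_pos c_less_1 s]
    have "ennreal ((\<Sum>k. (A ^^ k) g t)\<^sup>2) \<le> ennreal ((\<Sum>k. ((A ^^ k) g t)\<^sup>2 / c ^ k) / (1 - c))"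
      using weighted(2) by (rule ennreal_leI)
    also have "\<dots> = ennreal (1 / (1 - c)) * (\<Sum>k. ennreal (((A ^^ k) g t)\<^sup>2 / c ^ k))"
      using c_pos c_less_1 s
      by (simp add: ennreal_mult[symmetric] suminf_nonneg suminf_ennreal2)
    finally show ?case using weighted(1) by simp
  qed
qed

text \<open>On the null set where the series diverges, \<open>suminf\<close> yields an arbitrary value.\<close>

definition U :: "(real \<Rightarrow> real) \<Rightarrow> real \<Rightarrow> real" where
  "U g t = (\<Sum>k. (A ^^ k) g t)"

lemma measurable_U [measurable]: "g \<in> borel_measurable M \<Longrightarrow> U g \<in> borel_measurable M"
  unfolding U_def by measurable

lemma nn_sq_integral_U_le:
  assumes g: "L2 I g"
  shows "nn_sq_integral M (U g) \<le> ennreal (1 / (1 - c)\<^sup>2) * nn_sq_integral M g"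
proof -
  have [measurable]: "g \<in> borel_measurable M" using g by (simp add: L2_def)
  have "nn_sq_integral M (U g)
      \<le> (\<integral>\<^sup>+t. ennreal (1 / (1 - c)) * (\<Sum>k. ennreal (((A ^^ k) g t)\<^sup>2 / c ^ k)) \<partial>M)"
    unfolding nn_sq_integral_def U_def
    by (rule nn_integral_mono_AE) (use AE_summable_funpow_A[OF g] in \<open>rule eventually_mono, blast\<close>)
  also have "\<dots> = ennreal (1 / (1 - c)) * (\<integral>\<^sup>+t. (\<Sum>k. ennreal (((A ^^ k) g t)\<^sup>2 / c ^ k)) \<partial>M)"
    by (rule nn_integral_cmult) measurable
  also have "\<dots> \<le> ennreal (1 / (1 - c)) * (ennreal (1 / (1 - c)) * nn_sq_integral M g)"
    by (intro mult_left_mono nn_integral_weighted_funpow_A_le) auto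
  finally show ?thesis
    using c_less_1 by (simp add: ennreal_mult[symmetric] mult.assoc[symmetric] power2_eq_square)
qed

lemma bounded_op_U: "bounded_op I U"
proof (rule bounded_opI)
  fix g h :: "real \<Rightarrow> real" and a b :: real
  assume g: "L2 I g" and h: "L2 I h"
  show "AE t in M. U (\<lambda>s. a * g s + b * h s) t = a * U g t + b * U h t"
    using AE_summable_funpow_A[OF g] AE_summable_funpow_A[OF h]
  proof eventually_elim
    case (elim t)
    then have "summable (\<lambda>k. a * (A ^^ k) g t)" "summable (\<lambda>k. b * (A ^^ k) h t)"
      by (auto intro: summable_mult)
    then show ?case
      unfolding U_def funpow_A_linear by (simp add: suminf_add[symmetric] suminf_mult elim)
  qed
next
  show "\<And>g. L2 I g \<Longrightarrow> U g \<in> borel_measurable M"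
    by (simp add: L2_def measurable_U)
qed (fact nn_sq_integral_U_le, simp)

definition V :: "(real \<Rightarrow> real) \<Rightarrow> real \<Rightarrow> real" where
  "V g t = g t - A g t"

lemma measurable_V [measurable]:
  assumes g: "g \<in> borel_measurable M"
  shows "V g \<in> borel_measurable M"
  unfolding V_def[abs_def] using measurable_A[OF g] g by measurable

lemma nn_sq_integral_V_le:
  assumes g [measurable]: "g \<in> borel_measurable M"
  shows "nn_sq_integral M (V g) \<le> 4 * nn_sq_integral M g"
proof -
  have "nn_sq_integral M (V g) \<le> 2 * nn_sq_integral M g + 2 * nn_sq_integral M (A g)"
    unfolding V_def[abs_def] by (rule nn_sq_integral_diff_le) measurable
  also have "\<dots> \<le> 2 * nn_sq_integral M g + 2 * nn_sq_integral M g"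
  proof (intro add_left_mono mult_left_mono)
    have "c\<^sup>2 \<le> 1" using c_pos c_less_1 by (simp add: power_le_one)
    then have "ennreal (c\<^sup>2) * nn_sq_integral M g \<le> 1 * nn_sq_integral M g"
      by (intro mult_right_mono) auto
    with nn_sq_integral_A_le[OF g] show "nn_sq_integral M (A g) \<le> nn_sq_integral M g" by simp
  qed simp
  also have "\<dots> = 4 * nn_sq_integral M g"
    by (simp add: distrib_right[symmetric])
  finally show ?thesis .
qed

lemma bounded_op_V: "bounded_op I V"
proof (rule bounded_opI[where C = 4])
  show "AE t in M. V (\<lambda>s. a * g s + b * h s) t = a * V g t + b * V h t" for g h a b
    by (simp add: V_def A_linear algebra_simps)
qed (simp_all add: L2_def nn_sq_integral_V_le measurable_V)


lemma V_U_AE: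
  assumes g: "L2 I g"
  shows "AE t in M. V (U g) t = g t"
proof -
  have summ: "AE t in M. summable (\<lambda>k. (A ^^ k) g t)"
    using AE_summable_funpow_A[OF g] by (rule eventually_mono) blast
  \<comment> \<open>\<open>A (U g) t\<close> reads \<open>U g\<close> at the points \<open>L n t\<close>, where the series still converges for a.e. \<open>t\<close>\<close>
  show ?thesis
    using summ AE_Linv[OF summ]
  proof eventually_elim
    case (elim t)
    let ?a = "\<lambda>n k. if t \<in> Iseg x n then \<alpha> n (L n t) * (A ^^ k) g (L n t) else 0"
    have "A (U g) t = (\<Sum>n\<in>{1..N}. \<Sum>k. ?a n k)"
      unfolding A_def[of "U g"] U_def using elim(2) by (intro sum.cong refl) (auto simp: suminf_mult)
    also have "\<dots> = (\<Sum>k. \<Sum>n\<in>{1..N}. ?a n k)"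
    proof (intro suminf_sum[symmetric])
      fix n assume "n \<in> {1..N}"
      with elim(2) show "summable (?a n)"
        by (cases "t \<in> Iseg x n") (auto intro: summable_mult)
    qed
    also have "\<dots> = (\<Sum>k. (A ^^ Suc k) g t)"
      by (simp add: A_def)
    also have "\<dots> = U g t - g t"
      unfolding U_def by (subst suminf_split_head[OF elim(1)]) simp
    finally show ?case by (simp add: V_def)
  qed
qed

lemma U_V_AE:
  assumes g: "L2 I g"
  shows "AE t in M. U (V g) t = g t"
  using AE_summable_funpow_A[OF g]
proof eventually_elim
  case (elim t)
  then have summ: "summable (\<lambda>k. (A ^^ k) g t)" by blast
  then have summ_Suc: "summable (\<lambda>k. (A ^^ Suc k) g t)" by (subst summable_Suc_iff)
  have "U (V g) t = (\<Sum>k. (A ^^ k) g t - (A ^^ Suc k) g t)"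
    unfolding U_def V_def[abs_def] funpow_A_diff by (simp add: funpow_swap1)
  also have "\<dots> = (\<Sum>k. (A ^^ k) g t) - (\<Sum>k. (A ^^ Suc k) g t)"
    by (rule suminf_diff[symmetric, OF summ summ_Suc])
  also have "\<dots> = g t"
    by (subst suminf_split_head[OF summ]) simp
  finally show ?case .
qed

lemma AE_eq_0_if_fixed_point:
  assumes d: "L2 I d" and fixed: "AE t in M. d t = A d t"
  shows "AE t in M. d t = 0"
proof -
  have [measurable]: "d \<in> borel_measurable M" and fin: "nn_sq_integral M d < \<infinity>"
    using d by (auto simp: L2_iff_nn_sq_integral)
  have "nn_sq_integral M d = nn_sq_integral M (A d)"
    unfolding nn_sq_integral_def by (rule nn_integral_cong_AE) (use fixed in \<open>auto elim: eventually_mono\<close>)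
  also have "\<dots> \<le> ennreal (c\<^sup>2) * nn_sq_integral M d"
    by (rule nn_sq_integral_A_le) measurable
  finally have "nn_sq_integral M d = 0"
    using fin c_pos c_less_1
    by (intro ennreal_eq_0_if_le_contraction[where a = "c\<^sup>2"]) (auto simp: power_less_one_iff)
  then have "AE t in M. ennreal ((d t)\<^sup>2) = 0"
    unfolding nn_sq_integral_def by (subst (asm) nn_integral_0_iff_AE) auto
  then show ?thesis by (rule eventually_mono) simp
qed

lemma fractal_eq_U_AE:
  assumes f: "L2 I f" and h: "is_fractal x N \<alpha> f (\<lambda>_. 0) h"
  shows "AE t in M. h t = U f t"
proof -
  have hL2: "L2 I h" and hfix: "AE t in M. h t = f t + A h t"
    using h by (simp_all add: is_fractal_def fractal_T_zero_eq)
  have UL2: "L2 I (U f)"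
    using bounded_op_U f by (simp add: bounded_op_def)
  define d where "d t = h t - U f t" for t
  have "L2 I d"
    unfolding d_def using hL2 UL2 by (rule L2_diff)
  have "AE t in M. d t = A d t"
    using hfix V_U_AE[OF f]
  proof eventually_elim
    case (elim t)
    have "A d t = A h t - A (U f) t"
      unfolding d_def using funpow_A_diff[of 1] by simp
    with elim show ?case by (simp add: d_def V_def)
  qed
  from AE_eq_0_if_fixed_point[OF \<open>L2 I d\<close> this] show ?thesis
    by (rule eventually_mono) (simp add: d_def)
qed


lemma riesz_basis_fractal:
  assumes f: "orthonormal_basis I f" and h: "\<And>m. is_fractal x N \<alpha> (f m) (\<lambda>_. 0) (h m)"
  shows "riesz_basis I h"
proof -
  have fL2: "L2 I (f m)" for m
    using f by (simp add: orthonormal_basis_def)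
  have "AE t in M. U (f m) t = h m t" for m
    using fractal_eq_U_AE[OF fL2 h[of m]] by (rule eventually_mono) simp
  then show ?thesis
    unfolding riesz_basis_def using f bounded_op_U bounded_op_V V_U_AE U_V_AE by blast
qed

lemma l2_norm_fractal_bounds:
  assumes f: "orthonormal_basis I f" and h: "\<And>m. is_fractal x N \<alpha> (f m) (\<lambda>_. 0) (h m)"
  shows "1 / 2 \<le> l2_norm I (h m)" and "l2_norm I (h m) \<le> 1 / (1 - c)"
proof -
  have fL2: "L2 I (f m)" and norm_f: "l2_norm I (f m) = 1"
    using f unfolding orthonormal_basis_def l2_inner_def l2_norm_def by (auto simp: power2_eq_square)
  have hL2: "L2 I (h m)" and hfix: "AE t in M. h m t = f m t + A (h m) t"
    using h[of m] by (simp_all add: is_fractal_def fractal_T_zero_eq)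
  have [measurable]: "f m \<in> borel_measurable M" "h m \<in> borel_measurable M"
    and fin: "nn_sq_integral M (f m) < \<infinity>" "nn_sq_integral M (h m) < \<infinity>"
    using fL2 hL2 by (auto simp: L2_iff_nn_sq_integral)
  have "1 = l2_norm I (V (h m))"
    using hfix norm_f by (subst l2_norm_cong_AE[where v = "f m"]) (auto simp: V_def elim: eventually_mono)
  also have "\<dots> \<le> sqrt 4 * l2_norm I (h m)"
    using nn_sq_integral_V_le fin by (intro l2_norm_le_if_nn_sq_integral_le) measurable
  finally show "1 / 2 \<le> l2_norm I (h m)" by simp
  have "l2_norm I (h m) = l2_norm I (U (f m))"
    using fractal_eq_U_AE[OF fL2 h] by (intro l2_norm_cong_AE) measurable
  also have "\<dots> \<le> sqrt (1 / (1 - c)\<^sup>2) * l2_norm I (f m)"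
    using nn_sq_integral_U_le[OF fL2] fin by (intro l2_norm_le_if_nn_sq_integral_le) measurable
  finally show "l2_norm I (h m) \<le> 1 / (1 - c)"
    using norm_f c_less_1 by (simp add: real_sqrt_divide)
qed

lemma bounded_seq_fractal:
  assumes f: "orthonormal_basis I f" and h: "\<And>m. is_fractal x N \<alpha> (f m) (\<lambda>_. 0) (h m)"
  shows "bounded_seq I h"
  unfolding bounded_seq_def
  using l2_norm_fractal_bounds[OF f h] c_pos c_less_1
  by (intro exI[of _ "1 / 2 :: real"] exI[of _ "1 / (1 - c)"]) auto

end

theorem corollary6p15:
  fixes N :: nat and x :: "nat \<Rightarrow> real" and \<alpha> :: "nat \<Rightarrow> real \<Rightarrow> real"
    and f h :: "nat \<Rightarrow> real \<Rightarrow> real"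
  assumes "N \<ge> 2"
    and "\<And>i. i < N \<Longrightarrow> x i < x (Suc i)"
    and "\<And>n. n \<in> {1..N} \<Longrightarrow> \<alpha> n \<in> borel_measurable (lebesgue_on {x 0 .. x N})"
    and "(SUP n\<in>{1..N}. esssup (lebesgue_on {x 0 .. x N}) (\<lambda>t. ereal \<bar>\<alpha> n t\<bar>)) < 1/2"
    and "orthonormal_basis {x 0 .. x N} f"
    and "\<And>m. is_fractal x N \<alpha> (f m) (\<lambda>_. 0) (h m)"
  shows "bounded_seq {x 0 .. x N} h \<and> riesz_basis {x 0 .. x N} h"
proof -
  have "AE t in lebesgue_on {x 0 .. x N}. \<bar>\<alpha> n t\<bar> \<le> 1 / 2" if n: "n \<in> {1..N}" for n
  proof -
    have less: "esssup (lebesgue_on {x 0 .. x N}) (\<lambda>t. ereal \<bar>\<alpha> n t\<bar>) < ereal (1 / 2)"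
      using le_less_trans[OF SUP_upper[OF n] assms(4)] by (simp add: one_ereal_def)
    show ?thesis
      using esssup_AE[of "\<lambda>t. ereal \<bar>\<alpha> n t\<bar>"]
      by (rule eventually_mono) (use less in \<open>auto dest: le_less_trans\<close>)
  qed
  then interpret fractal_setting N x \<alpha> "1 / 2"
    using assms(1-3) by unfold_locales auto
  show ?thesis
    using bounded_seq_fractal riesz_basis_fractal assms(5,6) by blast
qed

end
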